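(* Let $m$ and $n$ be positive integers and let $\alpha$ be a real number. Define \[ p_{m}(X) = \sum_{\nu=0}^{m} \binom{m-\alpha}{m-\nu}\binom{n+\alpha}{\nu} X^{\nu}, \qquad q_{n}(X) = \sum_{\nu=0}^{n} \binom{m-\alpha}{\nu}\binom{n+\alpha}{n-\nu} X^{\nu}. \] Given a complex number $x$, let $C$ denote the straight line segment from $1$ to $x$. If $0$ is not on $C$, then \[ x^{\alpha} q_{n}(x) - p_{m}(x) = \alpha \binom{m-\alpha}{m}\binom{n+\alpha}{n} \int_{C} (t-x)^{m}(1-t)^{n} t^{\alpha-m-1}\, dt. \]
   Context: For a real number $y$ and a nonnegative integer $k$, $\binom{y}{k} = y(y-1)\cdots(y-k+1)/k!$. Complex powers $x^{\alpha}$ and $t^{\alpha-m-1}$ are taken with the principal branch of the logarithm (which is continuous along $C$ when $0 \notin C$). *)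

theory Defs
  imports "HOL-Complex_Analysis.Complex_Analysis"
begin

definition p_poly :: "nat \<Rightarrow> nat \<Rightarrow> real \<Rightarrow> complex \<Rightarrow> complex" where
  "p_poly m n \<alpha> X = (\<Sum>\<nu>=0..m. complex_of_real
      (((real m - \<alpha>) gchoose (m - \<nu>)) * ((real n + \<alpha>) gchoose \<nu>)) * X ^ \<nu>)"

definition q_poly :: "nat \<Rightarrow> nat \<Rightarrow> real \<Rightarrow> complex \<Rightarrow> complex" where
  "q_poly m n \<alpha> X = (\<Sum>\<nu>=0..n. complex_of_real
      (((real m - \<alpha>) gchoose \<nu>) * ((real n + \<alpha>) gchoose (n - \<nu>))) * X ^ \<nu>)"

end

theory Submission
  imports Defs
begin

text \<open>
  Both sides vanish at \<open>x = 1\<close>: the left-hand side by Vandermonde's identity, the integral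
  trivially. The hypothesis \<open>0 \<notin> C\<close> says that \<open>x\<close> lies in the slit plane \<open>\<complex> - (-\<infinity>, 0]\<close>,
  which is open and star-shaped about \<open>1\<close>, so it suffices to show that both sides have the
  same derivative there. This goes by induction on \<open>m\<close>. Writing
  \<open>I\<^sub>m(x) = \<integral>\<^sub>1\<^sup>x (t - x)\<^sup>m g(t) dt\<close>, one has \<open>I\<^sub>m\<^sub>+\<^sub>1' = -(m + 1) I\<^sub>m\<close> and \<open>I\<^sub>0' = g\<close>. On the other
  side, the absorption identities for binomial coefficients show that the derivative of
  \<open>x\<^sup>\<alpha> q\<^sub>n(x) - p\<^sub>m\<^sub>+\<^sub>1(x)\<close> is \<open>n + \<alpha>\<close> times the same expression with \<open>m\<close> and \<open>\<alpha> - 1\<close> in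
  place of \<open>m + 1\<close> and \<open>\<alpha>\<close>, and that for \<open>m = 0\<close> it is
  \<open>\<alpha> (n + \<alpha> choose n) (1 - x)\<^sup>n x\<^sup>\<alpha>\<^sup>-\<^sup>1\<close>.
\<close>

lemma nonpos_Reals_eq_image: "\<real>\<^sub>\<le>\<^sub>0 = complex_of_real ` {..0}"
  unfolding nonpos_Reals_def by auto

lemma closed_segment_one_subset_slit_plane:
  fixes x :: complex
  assumes "x \<notin> \<real>\<^sub>\<le>\<^sub>0"
  shows "closed_segment 1 x \<subseteq> - \<real>\<^sub>\<le>\<^sub>0"
  using starlike_slotted_complex_plane_left_aux[of x 0 1] assms
  by (simp add: nonpos_Reals_eq_image)

lemma zero_in_closed_segment_one_if_nonpos_Real:
  fixes x :: complex
  assumes "x \<in> \<real>\<^sub>\<le>\<^sub>0"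
  shows "0 \<in> closed_segment 1 x"
proof -
  obtain r where r: "x = of_real r" "r \<le> 0"
    using assms by (auto elim: nonpos_Reals_cases)
  have "(0::real) \<in> closed_segment 1 r"
    using r by (simp add: closed_segment_eq_real_ivl)
  then show ?thesis
    using closed_segment_of_real[of 1 r] r by force
qed

lemma open_slit_plane: "open (- \<real>\<^sub>\<le>\<^sub>0 :: complex set)"
  by (simp add: open_Compl)

lemma connected_slit_plane: "connected (- \<real>\<^sub>\<le>\<^sub>0 :: complex set)"
proof (rule starlike_imp_connected)
  show "starlike (- \<real>\<^sub>\<le>\<^sub>0 :: complex set)"
    unfolding starlike_def using closed_segment_one_subset_slit_plane by force
qed

lemma has_field_derivative_linepath_integral:
  assumes holo: "f holomorphic_on S" and "open S" and "a \<in> S"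
    and segments: "\<And>y. y \<in> S \<Longrightarrow> closed_segment a y \<subseteq> S" and "x \<in> S"
  shows "((\<lambda>y. contour_integral (linepath a y) f) has_field_derivative f x) (at x)"
proof -
  have "starlike S"
    using \<open>a \<in> S\<close> segments unfolding starlike_def by blast
  then obtain g where g: "\<And>z. z \<in> S \<Longrightarrow> (g has_field_derivative f z) (at z)"
    using holomorphic_starlike_primitive[OF holomorphic_on_imp_continuous_on[OF holo] _ \<open>open S\<close> finite.emptyI]
      holomorphic_on_imp_differentiable_at[OF holo \<open>open S\<close>] by blast
  have "((\<lambda>y. g y - g a) has_field_derivative f x) (at x)"
    using g[OF \<open>x \<in> S\<close>] by (auto intro!: derivative_eq_intros)
  then show ?thesis
  proof (rule has_field_derivative_transform_within_open[OF _ \<open>open S\<close> \<open>x \<in> S\<close>])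
    fix y assume "y \<in> S"
    have "(f has_contour_integral g y - g a) (linepath a y)"
      using contour_integral_primitive[of S g f "linepath a y"] g segments[OF \<open>y \<in> S\<close>]
      by (auto intro: has_field_derivative_at_within)
    then show "g y - g a = contour_integral (linepath a y) f"
      by (simp add: contour_integral_unique)
  qed
qed

lemma contour_integral_linepath_power_kernel:
  assumes "continuous_on (closed_segment a y) g"
  shows "contour_integral (linepath a y) (\<lambda>t. (t - y) ^ k * g t) =
    (\<Sum>j\<le>k. of_nat (k choose j) * (- y) ^ (k - j) * contour_integral (linepath a y) (\<lambda>t. t ^ j * g t))"
proof -
  have integrable: "(\<lambda>t. t ^ j * g t) contour_integrable_on linepath a y" for j
    by (intro contour_integrable_continuous_linepath continuous_intros assms)
  have "(t - y) ^ k = (\<Sum>j\<le>k. of_nat (k choose j) * t ^ j * (- y) ^ (k - j))" for t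
    using binomial_ring[of t "- y" k] by simp
  then have "contour_integral (linepath a y) (\<lambda>t. (t - y) ^ k * g t) =
      contour_integral (linepath a y) (\<lambda>t. \<Sum>j\<le>k. of_nat (k choose j) * (- y) ^ (k - j) * (t ^ j * g t))"
    by (simp add: sum_distrib_left mult_ac)
  also have "\<dots> = (\<Sum>j\<le>k. contour_integral (linepath a y) (\<lambda>t. of_nat (k choose j) * (- y) ^ (k - j) * (t ^ j * g t)))"
    by (intro contour_integral_sum contour_integrable_lmul integrable) simp
  finally show ?thesis
    by (simp add: contour_integral_lmul integrable)
qed

lemma has_field_derivative_linepath_integral_power_kernel:
  assumes holo: "g holomorphic_on S" and "open S" and "a \<in> S"
    and segments: "\<And>y. y \<in> S \<Longrightarrow> closed_segment a y \<subseteq> S" and "x \<in> S"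
  shows "((\<lambda>y. contour_integral (linepath a y) (\<lambda>t. (t - y) ^ Suc m * g t)) has_field_derivative
      - of_nat (Suc m) * contour_integral (linepath a x) (\<lambda>t. (t - x) ^ m * g t)) (at x)"
proof -
  define \<Phi> where "\<Phi> j y = contour_integral (linepath a y) (\<lambda>t. t ^ j * g t)" for j y
  have cont: "continuous_on (closed_segment a y) g" if "y \<in> S" for y
    using holomorphic_on_imp_continuous_on[OF holo] segments[OF that] by (rule continuous_on_subset)
  have d\<Phi>: "(\<Phi> j has_field_derivative x ^ j * g x) (at x)" for j
    unfolding \<Phi>_def[abs_def]
    by (rule has_field_derivative_linepath_integral[OF _ assms(2-5)]) (intro holomorphic_intros holo)
  \<comment> \<open>The binomial expansion of \<open>(t - y)\<^sup>k\<close> moves the endpoint \<open>y\<close> out of the integrand.\<close>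
  have expand: "contour_integral (linepath a y) (\<lambda>t. (t - y) ^ k * g t) =
      (\<Sum>j\<le>k. of_nat (k choose j) * (- y) ^ (k - j) * \<Phi> j y)" if "y \<in> S" for k y
    unfolding \<Phi>_def by (rule contour_integral_linepath_power_kernel[OF cont[OF that]])
  let ?G = "\<lambda>y. \<Sum>j\<le>Suc m. of_nat (Suc m choose j) * (- y) ^ (Suc m - j) * \<Phi> j y"
  let ?A = "\<lambda>j. of_nat (Suc m choose j) * - (of_nat (Suc m - j) * (- x) ^ (Suc m - j - 1)) * \<Phi> j x"
  let ?B = "\<lambda>j. of_nat (Suc m choose j) * (- x) ^ (Suc m - j) * (x ^ j * g x)"
  have "(?G has_field_derivative (\<Sum>j\<le>Suc m. ?A j + ?B j)) (at x)"
    by (intro DERIV_sum) (auto intro!: derivative_eq_intros d\<Phi>)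
  moreover have "(\<Sum>j\<le>Suc m. ?B j) = (\<Sum>j\<le>Suc m. of_nat (Suc m choose j) * x ^ j * (- x) ^ (Suc m - j)) * g x"
    unfolding sum_distrib_right by (rule sum.cong) (simp_all add: mult_ac)
  moreover have "\<dots> = 0"
    by (simp flip: binomial_ring)
  moreover have "?A j = - of_nat (Suc m) * (of_nat (m choose j) * (- x) ^ (m - j) * \<Phi> j x)" if "j \<le> m" for j
  proof -
    have "of_nat (Suc m choose j) * of_nat (Suc m - j) = (of_nat (Suc m) * of_nat (m choose j) :: complex)"
      using binomial_absorb_comp[of "Suc m" j] by (metis of_nat_mult diff_Suc_1 mult.commute)
    moreover have "Suc m - j - 1 = m - j" by simp
    ultimately show ?thesis
      by (metis (no_types, lifting) mult.assoc mult.left_commute mult_minus_left mult_minus_right)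
  qed
  then have "(\<Sum>j\<le>Suc m. ?A j) = - of_nat (Suc m) * (\<Sum>j\<le>m. of_nat (m choose j) * (- x) ^ (m - j) * \<Phi> j x)"
    by (simp add: sum_distrib_left)
  ultimately have "(?G has_field_derivative
      - of_nat (Suc m) * (\<Sum>j\<le>m. of_nat (m choose j) * (- x) ^ (m - j) * \<Phi> j x)) (at x)"
    by (simp only: sum.distrib) simp
  then have "((\<lambda>y. contour_integral (linepath a y) (\<lambda>t. (t - y) ^ Suc m * g t)) has_field_derivative
      - of_nat (Suc m) * (\<Sum>j\<le>m. of_nat (m choose j) * (- x) ^ (m - j) * \<Phi> j x)) (at x)"
    by (rule has_field_derivative_transform_within_open[OF _ \<open>open S\<close> \<open>x \<in> S\<close>])
      (rule expand[symmetric])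
  then show ?thesis
    unfolding expand[OF \<open>x \<in> S\<close>, of m] .
qed

lemma has_field_derivative_eq_imp_eq_on_connected:
  fixes f g h :: "complex \<Rightarrow> complex"
  assumes "connected S" "open S" "a \<in> S" "x \<in> S" and "f a = g a"
    and "\<And>z. z \<in> S \<Longrightarrow> (f has_field_derivative h z) (at z)"
    and "\<And>z. z \<in> S \<Longrightarrow> (g has_field_derivative h z) (at z)"
  shows "f x = g x"
proof -
  have "(\<lambda>z. f z - g z) constant_on S"
  proof (rule has_field_derivative_0_imp_constant_on[OF _ assms(1,2)])
    show "((\<lambda>z. f z - g z) has_field_derivative 0) (at z)" if "z \<in> S" for z
      using DERIV_diff[OF assms(6,7)[OF that]] by simp
  qed
  then obtain c where "\<And>z. z \<in> S \<Longrightarrow> f z - g z = c"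
    unfolding constant_on_def by blast
  then show ?thesis
    using assms(3-5) by (metis right_minus_eq)
qed

lemma has_field_derivative_powr_times_power_sum:
  fixes a :: complex and c :: "nat \<Rightarrow> complex"
  assumes "x \<notin> \<real>\<^sub>\<le>\<^sub>0"
  shows "((\<lambda>x. x powr a * (\<Sum>\<nu>\<le>N. c \<nu> * x ^ \<nu>)) has_field_derivative
      x powr (a - 1) * (\<Sum>\<nu>\<le>N. (a + of_nat \<nu>) * c \<nu> * x ^ \<nu>)) (at x)"
proof -
  let ?S = "\<Sum>\<nu>\<le>N. c \<nu> * x ^ \<nu>" and ?S' = "\<Sum>\<nu>\<le>N. of_nat \<nu> * x ^ (\<nu> - 1) * c \<nu>"
  have deriv: "((\<lambda>x. x powr a * (\<Sum>\<nu>\<le>N. c \<nu> * x ^ \<nu>)) has_field_derivative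
      a * x powr (a - 1) * ?S + x powr a * ?S') (at x)"
    using assms by (auto intro!: derivative_eq_intros)
  have "x powr a = x powr (a - 1) * x"
    using assms by (auto simp add: powr_def exp_diff field_simps)
  then have "a * x powr (a - 1) * ?S + x powr a * ?S' = x powr (a - 1) * (a * ?S + x * ?S')"
    by (simp add: algebra_simps)
  also have "x * ?S' = (\<Sum>\<nu>\<le>N. of_nat \<nu> * c \<nu> * x ^ \<nu>)"
  proof -
    have "x * (of_nat \<nu> * x ^ (\<nu> - 1) * c \<nu>) = of_nat \<nu> * c \<nu> * x ^ \<nu>" for \<nu>
      by (cases \<nu>) auto
    then show ?thesis
      unfolding sum_distrib_left by (intro sum.cong refl)
  qed
  also have "a * ?S + (\<Sum>\<nu>\<le>N. of_nat \<nu> * c \<nu> * x ^ \<nu>) = (\<Sum>\<nu>\<le>N. (a + of_nat \<nu>) * c \<nu> * x ^ \<nu>)"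
    by (simp add: sum_distrib_left distrib_right sum.distrib mult.assoc)
  finally show ?thesis
    by (rule DERIV_cong[OF deriv])
qed

lemma has_field_derivative_power_sum:
  fixes c :: "nat \<Rightarrow> 'a :: real_normed_field"
  shows "((\<lambda>x. \<Sum>\<nu>\<le>Suc N. c \<nu> * x ^ \<nu>) has_field_derivative
      (\<Sum>\<nu>\<le>N. of_nat (Suc \<nu>) * c (Suc \<nu>) * x ^ \<nu>)) (at x)"
proof -
  have "((\<lambda>x. \<Sum>\<nu>\<le>Suc N. c \<nu> * x ^ \<nu>) has_field_derivative
      (\<Sum>\<nu>\<le>Suc N. c \<nu> * (of_nat \<nu> * x ^ (\<nu> - 1)))) (at x)"
    by (intro DERIV_sum) (auto intro!: derivative_eq_intros)
  then show ?thesis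
    by (simp add: sum.atMost_Suc_shift mult_ac del: sum.atMost_Suc)
qed

lemma gbinomial_absorb_comp_diff:
  fixes a :: "'a :: field_char_0"
  assumes "k \<le> n"
  shows "(a + of_nat k) * ((of_nat n + a) gchoose (n - k)) = (of_nat n + a) * ((of_nat n + a - 1) gchoose (n - k))"
  using gbinomial_absorb_comp[of "of_nat n + a" "n - k"] assms by (simp add: of_nat_diff)

lemma gbinomial_minus_mult_gbinomial_diff:
  fixes a :: "'a :: field_char_0"
  assumes "k \<le> n"
  shows "(a + of_nat k) * ((- a) gchoose k) * ((of_nat n + a) gchoose (n - k))
    = a * ((of_nat n + a) gchoose n) * (of_nat (n choose k) * (- 1) ^ k)"
proof -
  let ?y = "of_nat n + a - 1"
  have "(?y gchoose n) * (of_nat n gchoose (n - k)) = (?y gchoose (n - k)) * ((?y - of_nat (n - k)) gchoose k)"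
    using gbinomial_trinomial_revision[of "n - k" n ?y] assms by simp
  moreover have "?y - of_nat (n - k) = a + of_nat k - 1"
    using assms by (simp add: of_nat_diff)
  moreover have "of_nat n gchoose (n - k) = (of_nat (n choose k) :: 'a)"
    using gbinomial_of_nat_symmetric[of "n - k" n] assms by (simp add: binomial_gbinomial)
  ultimately have revision: "(?y gchoose (n - k)) * ((a + of_nat k - 1) gchoose k) = (?y gchoose n) * of_nat (n choose k)"
    by simp
  have "(a + of_nat k) * ((- a) gchoose k) * ((of_nat n + a) gchoose (n - k))
      = (- 1) ^ k * ((a + of_nat k - 1) gchoose k) * ((a + of_nat k) * ((of_nat n + a) gchoose (n - k)))"
    unfolding gbinomial_minus by (simp only: mult_ac)
  also have "\<dots> = (- 1) ^ k * (of_nat n + a) * ((?y gchoose (n - k)) * ((a + of_nat k - 1) gchoose k))"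
    by (simp add: gbinomial_absorb_comp_diff[OF assms] mult_ac)
  also have "\<dots> = (- 1) ^ k * (of_nat n + a) * ((?y gchoose n) * of_nat (n choose k))"
    by (simp only: revision)
  also have "\<dots> = (- 1) ^ k * of_nat (n choose k) * ((of_nat n + a) * (?y gchoose n))"
    by (simp only: mult_ac)
  also have "(of_nat n + a) * (?y gchoose n) = a * ((of_nat n + a) gchoose n)"
    using gbinomial_absorb_comp_diff[of 0 n a] by simp
  also have "(- 1) ^ k * of_nat (n choose k) * (a * ((of_nat n + a) gchoose n))
      = a * ((of_nat n + a) gchoose n) * (of_nat (n choose k) * (- 1) ^ k)"
    by (simp only: mult_ac)
  finally show ?thesis .
qed

definition pade_remainder :: "nat \<Rightarrow> nat \<Rightarrow> real \<Rightarrow> complex \<Rightarrow> complex" where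
  "pade_remainder m n \<alpha> x = x powr of_real \<alpha> * q_poly m n \<alpha> x - p_poly m n \<alpha> x"

definition pade_integral :: "nat \<Rightarrow> nat \<Rightarrow> complex \<Rightarrow> complex \<Rightarrow> complex" where
  "pade_integral m n \<beta> x = contour_integral (linepath 1 x) (\<lambda>t. (t - x) ^ m * ((1 - t) ^ n * t powr \<beta>))"

lemma holomorphic_pade_kernel: "(\<lambda>t. (1 - t) ^ n * t powr \<beta>) holomorphic_on - \<real>\<^sub>\<le>\<^sub>0"
  by (intro holomorphic_intros) auto

lemma has_field_derivative_pade_integral_0:
  assumes "x \<notin> \<real>\<^sub>\<le>\<^sub>0"
  shows "(pade_integral 0 n \<beta> has_field_derivative (1 - x) ^ n * x powr \<beta>) (at x)"
  using has_field_derivative_linepath_integral[OF holomorphic_pade_kernel open_slit_plane]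
    closed_segment_one_subset_slit_plane assms
  by (simp add: pade_integral_def[abs_def])

lemma has_field_derivative_pade_integral_Suc:
  assumes "x \<notin> \<real>\<^sub>\<le>\<^sub>0"
  shows "(pade_integral (Suc m) n \<beta> has_field_derivative - of_nat (Suc m) * pade_integral m n \<beta> x) (at x)"
  unfolding pade_integral_def[abs_def]
  by (rule has_field_derivative_linepath_integral_power_kernel[OF holomorphic_pade_kernel open_slit_plane])
    (use closed_segment_one_subset_slit_plane assms in auto)

lemma pade_remainder_at_one: "pade_remainder m n \<alpha> 1 = 0"
proof -
  have q: "(\<Sum>\<nu>=0..n. ((real m - \<alpha>) gchoose \<nu>) * ((real n + \<alpha>) gchoose (n - \<nu>))) = real (m + n) gchoose n"
    using gbinomial_Vandermonde[of "real m - \<alpha>" "real n + \<alpha>" n] by (simp add: add.commute)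
  have p: "(\<Sum>\<nu>=0..m. ((real m - \<alpha>) gchoose (m - \<nu>)) * ((real n + \<alpha>) gchoose \<nu>)) = real (m + n) gchoose m"
    using gbinomial_Vandermonde[of "real n + \<alpha>" "real m - \<alpha>" m] by (simp add: mult.commute add.commute)
  have "real (m + n) gchoose n = real (m + n) gchoose m"
    using gbinomial_of_nat_symmetric[of m "m + n", where 'a=real] by simp
  then show ?thesis
    using arg_cong[where f = complex_of_real, OF q] arg_cong[where f = complex_of_real, OF p]
    unfolding pade_remainder_def q_poly_def p_poly_def by (simp add: of_real_sum)
qed

lemma has_field_derivative_powr_times_q_poly_Suc:
  assumes "x \<notin> \<real>\<^sub>\<le>\<^sub>0"
  shows "((\<lambda>x. x powr of_real \<alpha> * q_poly (Suc m) n \<alpha> x) has_field_derivative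
      x powr (of_real \<alpha> - 1) * (of_real (real n + \<alpha>) * q_poly m n (\<alpha> - 1) x)) (at x)"
proof -
  let ?c = "\<lambda>\<nu>. complex_of_real (((real (Suc m) - \<alpha>) gchoose \<nu>) * ((real n + \<alpha>) gchoose (n - \<nu>)))"
  have coeff: "(\<alpha> + real \<nu>) * (((real (Suc m) - \<alpha>) gchoose \<nu>) * ((real n + \<alpha>) gchoose (n - \<nu>)))
      = (real n + \<alpha>) * (((real m - (\<alpha> - 1)) gchoose \<nu>) * ((real n + (\<alpha> - 1)) gchoose (n - \<nu>)))"
    if "\<nu> \<le> n" for \<nu>
  proof -
    have "real (Suc m) - \<alpha> = real m - (\<alpha> - 1)" "real n + (\<alpha> - 1) = real n + \<alpha> - 1"
      by simp_all
    then show ?thesis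
      using gbinomial_absorb_comp_diff[OF that, of \<alpha>] by (metis mult.left_commute)
  qed
  have sum: "(\<Sum>\<nu>\<le>n. (of_real \<alpha> + of_nat \<nu>) * ?c \<nu> * x ^ \<nu>) = of_real (real n + \<alpha>) * q_poly m n (\<alpha> - 1) x"
    unfolding q_poly_def atLeast0AtMost sum_distrib_left
  proof (intro sum.cong refl)
    fix \<nu> assume "\<nu> \<in> {..n}"
    then show "(of_real \<alpha> + of_nat \<nu>) * ?c \<nu> * x ^ \<nu> = of_real (real n + \<alpha>) *
        (of_real (((real m - (\<alpha> - 1)) gchoose \<nu>) * ((real n + (\<alpha> - 1)) gchoose (n - \<nu>))) * x ^ \<nu>)"
      using arg_cong[where f = complex_of_real, OF coeff[of \<nu>]] by simp
  qed
  have "q_poly (Suc m) n \<alpha> = (\<lambda>x. \<Sum>\<nu>\<le>n. ?c \<nu> * x ^ \<nu>)"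
    by (intro ext) (simp only: q_poly_def atLeast0AtMost)
  then have "((\<lambda>x. x powr of_real \<alpha> * q_poly (Suc m) n \<alpha> x) has_field_derivative
      x powr (of_real \<alpha> - 1) * (\<Sum>\<nu>\<le>n. (of_real \<alpha> + of_nat \<nu>) * ?c \<nu> * x ^ \<nu>)) (at x)"
    using has_field_derivative_powr_times_power_sum[OF assms] by simp
  then show ?thesis
    unfolding sum .
qed

lemma has_field_derivative_p_poly_Suc:
  "(p_poly (Suc m) n \<alpha> has_field_derivative of_real (real n + \<alpha>) * p_poly m n (\<alpha> - 1) x) (at x)"
proof -
  let ?c = "\<lambda>\<nu>. complex_of_real (((real (Suc m) - \<alpha>) gchoose (Suc m - \<nu>)) * ((real n + \<alpha>) gchoose \<nu>))"
  have coeff: "real (Suc \<nu>) * (((real (Suc m) - \<alpha>) gchoose (Suc m - Suc \<nu>)) * ((real n + \<alpha>) gchoose Suc \<nu>))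
      = (real n + \<alpha>) * (((real m - (\<alpha> - 1)) gchoose (m - \<nu>)) * ((real n + (\<alpha> - 1)) gchoose \<nu>))" for \<nu>
  proof -
    have "real (Suc m) - \<alpha> = real m - (\<alpha> - 1)" "real n + (\<alpha> - 1) = real n + \<alpha> - 1"
      by simp_all
    then show ?thesis
      using gbinomial_absorption[of \<nu> "real n + \<alpha>"] by (metis diff_Suc_Suc mult.left_commute)
  qed
  have sum: "(\<Sum>\<nu>\<le>m. of_nat (Suc \<nu>) * ?c (Suc \<nu>) * x ^ \<nu>) = of_real (real n + \<alpha>) * p_poly m n (\<alpha> - 1) x"
    unfolding p_poly_def atLeast0AtMost sum_distrib_left
  proof (intro sum.cong refl)
    fix \<nu>
    show "of_nat (Suc \<nu>) * ?c (Suc \<nu>) * x ^ \<nu> = of_real (real n + \<alpha>) *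
        (of_real (((real m - (\<alpha> - 1)) gchoose (m - \<nu>)) * ((real n + (\<alpha> - 1)) gchoose \<nu>)) * x ^ \<nu>)"
      using arg_cong[where f = complex_of_real, OF coeff[of \<nu>]] by (simp del: of_nat_Suc)
  qed
  have "p_poly (Suc m) n \<alpha> = (\<lambda>x. \<Sum>\<nu>\<le>Suc m. ?c \<nu> * x ^ \<nu>)"
    by (intro ext) (simp only: p_poly_def atLeast0AtMost)
  then show ?thesis
    unfolding sum[symmetric] by (simp only:) (rule has_field_derivative_power_sum)
qed

lemma has_field_derivative_pade_remainder_Suc:
  assumes "x \<notin> \<real>\<^sub>\<le>\<^sub>0"
  shows "(pade_remainder (Suc m) n \<alpha> has_field_derivative
      of_real (real n + \<alpha>) * pade_remainder m n (\<alpha> - 1) x) (at x)"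
proof -
  have "(pade_remainder (Suc m) n \<alpha> has_field_derivative
      x powr (of_real \<alpha> - 1) * (of_real (real n + \<alpha>) * q_poly m n (\<alpha> - 1) x)
      - of_real (real n + \<alpha>) * p_poly m n (\<alpha> - 1) x) (at x)"
    unfolding pade_remainder_def[abs_def]
    by (rule DERIV_diff[OF has_field_derivative_powr_times_q_poly_Suc[OF assms] has_field_derivative_p_poly_Suc])
  then show ?thesis
    by (simp add: pade_remainder_def algebra_simps)
qed

lemma has_field_derivative_pade_remainder_0:
  assumes "x \<notin> \<real>\<^sub>\<le>\<^sub>0"
  shows "(pade_remainder 0 n \<alpha> has_field_derivative
      of_real (\<alpha> * ((real n + \<alpha>) gchoose n)) * ((1 - x) ^ n * x powr (of_real \<alpha> - 1))) (at x)"
proof -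
  let ?K = "complex_of_real (\<alpha> * ((real n + \<alpha>) gchoose n))"
  let ?cq = "\<lambda>\<nu>. complex_of_real (((- \<alpha>) gchoose \<nu>) * ((real n + \<alpha>) gchoose (n - \<nu>)))"
  have remainder: "pade_remainder 0 n \<alpha> = (\<lambda>x. x powr of_real \<alpha> * (\<Sum>\<nu>\<le>n. ?cq \<nu> * x ^ \<nu>) - 1)"
  proof (intro ext)
    fix x
    have "p_poly 0 n \<alpha> x = 1"
      by (simp add: p_poly_def)
    moreover have "q_poly 0 n \<alpha> x = (\<Sum>\<nu>\<le>n. ?cq \<nu> * x ^ \<nu>)"
      by (simp only: q_poly_def atLeast0AtMost of_nat_0 diff_0)
    ultimately show "pade_remainder 0 n \<alpha> x = x powr of_real \<alpha> * (\<Sum>\<nu>\<le>n. ?cq \<nu> * x ^ \<nu>) - 1"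
      by (simp only: pade_remainder_def)
  qed
  have "(of_real \<alpha> + of_nat \<nu>) * ?cq \<nu> * x ^ \<nu> = ?K * (of_nat (n choose \<nu>) * (- x) ^ \<nu>)"
    if "\<nu> \<le> n" for \<nu>
  proof -
    have "(of_real \<alpha> + of_nat \<nu>) * ?cq \<nu> = ?K * (of_nat (n choose \<nu>) * (- 1) ^ \<nu>)"
      using arg_cong[where f = complex_of_real, OF gbinomial_minus_mult_gbinomial_diff[OF that, of \<alpha>]]
      by (simp only: of_real_mult of_real_add of_real_of_nat_eq of_real_power of_real_minus of_real_1 mult.assoc)
    then show ?thesis
      by (simp only: power_minus[of x] mult.assoc)
  qed
  then have "(\<Sum>\<nu>\<le>n. (of_real \<alpha> + of_nat \<nu>) * ?cq \<nu> * x ^ \<nu>) = ?K * (\<Sum>\<nu>\<le>n. of_nat (n choose \<nu>) * (- x) ^ \<nu>)"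
    unfolding sum_distrib_left by (intro sum.cong refl) simp
  also have "(\<Sum>\<nu>\<le>n. of_nat (n choose \<nu>) * (- x) ^ \<nu>) = (1 - x) ^ n"
    using binomial_ring[of "- x" 1 n] by simp
  finally have coeffs: "(\<Sum>\<nu>\<le>n. (of_real \<alpha> + of_nat \<nu>) * ?cq \<nu> * x ^ \<nu>) = ?K * (1 - x) ^ n" .
  have "((\<lambda>x. x powr of_real \<alpha> * (\<Sum>\<nu>\<le>n. ?cq \<nu> * x ^ \<nu>) - 1) has_field_derivative
      x powr (of_real \<alpha> - 1) * (\<Sum>\<nu>\<le>n. (of_real \<alpha> + of_nat \<nu>) * ?cq \<nu> * x ^ \<nu>) - 0) (at x)"
    by (rule DERIV_diff[OF has_field_derivative_powr_times_power_sum[OF assms] DERIV_const])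
  then show ?thesis
    unfolding remainder coeffs by (simp only: diff_zero mult_ac)
qed

lemma pade_constant_Suc:
  "(real n + \<alpha>) * ((\<alpha> - 1) * ((real m - (\<alpha> - 1)) gchoose m) * ((real n + (\<alpha> - 1)) gchoose n))
    = - real (Suc m) * (\<alpha> * ((real (Suc m) - \<alpha>) gchoose Suc m) * ((real n + \<alpha>) gchoose n))"
proof -
  let ?b = "real (Suc m) - \<alpha>"
  have "real m - (\<alpha> - 1) = ?b" "real n + (\<alpha> - 1) = real n + \<alpha> - 1"
    by simp_all
  then have "(real n + \<alpha>) * ((\<alpha> - 1) * ((real m - (\<alpha> - 1)) gchoose m) * ((real n + (\<alpha> - 1)) gchoose n))
      = ((\<alpha> - 1) * (?b gchoose m)) * ((real n + \<alpha>) * ((real n + \<alpha> - 1) gchoose n))"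
    by (simp only: mult_ac)
  also have "(\<alpha> - 1) * (?b gchoose m) = - real (Suc m) * (?b gchoose Suc m)"
    using gbinomial_mult_1[of ?b m] by (simp add: algebra_simps)
  also have "(real n + \<alpha>) * ((real n + \<alpha> - 1) gchoose n) = \<alpha> * ((real n + \<alpha>) gchoose n)"
    using gbinomial_absorb_comp_diff[of 0 n \<alpha>] by simp
  finally show ?thesis
    by (simp only: mult_ac)
qed

lemma pade_remainder_eq_integral:
  assumes "x \<notin> \<real>\<^sub>\<le>\<^sub>0"
  shows "pade_remainder m n \<alpha> x = of_real (\<alpha> * ((real m - \<alpha>) gchoose m) * ((real n + \<alpha>) gchoose n))
    * pade_integral m n (of_real \<alpha> - of_nat m - 1) x"
  using assms
proof (induction m arbitrary: \<alpha> x)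
  case 0
  let ?K = "complex_of_real (\<alpha> * ((real n + \<alpha>) gchoose n))"
  have "pade_remainder 0 n \<alpha> x = ?K * pade_integral 0 n (of_real \<alpha> - 1) x"
  proof (rule has_field_derivative_eq_imp_eq_on_connected
      [where a = 1, OF connected_slit_plane open_slit_plane _ _ _ has_field_derivative_pade_remainder_0])
    fix z :: complex
    assume "z \<in> - \<real>\<^sub>\<le>\<^sub>0"
    then show "((\<lambda>y. ?K * pade_integral 0 n (of_real \<alpha> - 1) y) has_field_derivative
        ?K * ((1 - z) ^ n * z powr (of_real \<alpha> - 1))) (at z)"
      by (intro DERIV_cmult has_field_derivative_pade_integral_0) simp
  qed (use "0.prems" in \<open>simp_all add: pade_remainder_at_one pade_integral_def\<close>)
  then show ?case
    by simp
next
  case (Suc m)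
  let ?K = "\<alpha> * ((real (Suc m) - \<alpha>) gchoose Suc m) * ((real n + \<alpha>) gchoose n)"
  let ?\<beta> = "complex_of_real \<alpha> - of_nat (Suc m) - 1"
  show ?case
  proof (rule has_field_derivative_eq_imp_eq_on_connected
      [where a = 1, OF connected_slit_plane open_slit_plane _ _ _ has_field_derivative_pade_remainder_Suc])
    fix z :: complex
    assume "z \<in> - \<real>\<^sub>\<le>\<^sub>0"
    then have z: "z \<notin> \<real>\<^sub>\<le>\<^sub>0"
      by simp
    have "complex_of_real (\<alpha> - 1) - of_nat m - 1 = ?\<beta>"
      by simp
    then have "of_real (real n + \<alpha>) * pade_remainder m n (\<alpha> - 1) z
        = of_real ((real n + \<alpha>) * ((\<alpha> - 1) * ((real m - (\<alpha> - 1)) gchoose m) * ((real n + (\<alpha> - 1)) gchoose n)))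
          * pade_integral m n ?\<beta> z"
      unfolding Suc.IH[OF z] by (simp only: of_real_mult mult.assoc)
    also have "\<dots> = of_real ?K * (- of_nat (Suc m) * pade_integral m n ?\<beta> z)"
      unfolding pade_constant_Suc by (simp add: mult_ac)
    finally show "((\<lambda>y. of_real ?K * pade_integral (Suc m) n ?\<beta> y) has_field_derivative
        of_real (real n + \<alpha>) * pade_remainder m n (\<alpha> - 1) z) (at z)"
      using DERIV_cmult[OF has_field_derivative_pade_integral_Suc[OF z], where c = "of_real ?K"] by simp
  qed (use Suc.prems in \<open>simp_all add: pade_remainder_at_one pade_integral_def\<close>)
qed

theorem lemma2p2:
  fixes m n :: nat and \<alpha> :: real and x :: complex
  assumes "m > 0" and "n > 0"
    and "0 \<notin> closed_segment 1 x"
  shows "x powr (complex_of_real \<alpha>) * q_poly m n \<alpha> x - p_poly m n \<alpha> x =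
    complex_of_real (\<alpha> * ((real m - \<alpha>) gchoose m) * ((real n + \<alpha>) gchoose n)) *
    contour_integral (linepath 1 x)
      (\<lambda>t. (t - x) ^ m * (1 - t) ^ n * t powr (complex_of_real \<alpha> - of_nat m - 1))"
proof -
  have "x \<notin> \<real>\<^sub>\<le>\<^sub>0"
    using assms(3) zero_in_closed_segment_one_if_nonpos_Real by blast
  from pade_remainder_eq_integral[OF this, of m n \<alpha>] show ?thesis
    by (simp add: pade_remainder_def pade_integral_def mult.assoc)
qed

end
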